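(* Let $u\in\Omega_0^M$. For every node $v$ of the binary tree $B_\Lambda(u)$ with descendents $v_l,v_r$, one has $\tau(v)\le\tau(v_l)$ and $\tau(v)\le\tau(v_r)$, with at least one of these inequalities strict. In particular $\tau$ is non-decreasing along every path in $B_\Lambda(u)$ starting at the root $u$.
   Context: $\kappa(x,y,z)=-x^2-y^2+z^2+xyz-2$; for $u=(x,y,z)$ set $\bar z(u)=-xy-z$ and $\tau(u)=-z\,\bar z(u)$. $Q_x(x,y,z)=(yz-x,y,z)$, $Q_y(x,y,z)=(x,xz-y,z)$, $Q_z(x,y,z)=(x,y,-xy-z)$ (involutions preserving $\kappa$), and $\Lambda=\langle Q_x,Q_y,Q_z\rangle$. $\Omega_0^M=\{(x,y,z): z<-2,\ xy+z>2\}$. For $u\in\Omega_0^M$ the binary tree $B_\Lambda(u)$ is defined inductively: $u$ is the root; its two descendents are $Q_x(u)$ (left) and $Q_y(u)$ (right); if $v\ne u$ is a node with parent $\hat v$ and $v=\lambda\hat v$ with $\lambda\in\{Q_x,Q_y,Q_z\}$, then the two descendents of $v$ are $\lambda_1v$ and $\lambda_2 v$ where $\{\lambda_1,\lambda_2\}=\{Q_x,Q_y,Q_z\}\setminus\{\lambda\}$. *)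

theory Defs
  imports Complex_Main
begin

type_synonym pt = "real \<times> real \<times> real"

definition kappa :: "pt \<Rightarrow> real" where
  "kappa u = (case u of (x,y,z) \<Rightarrow> - (x^2) - y^2 + z^2 + x*y*z - 2)"

definition zbar :: "pt \<Rightarrow> real" where
  "zbar u = (case u of (x,y,z) \<Rightarrow> -x*y - z)"

definition tau :: "pt \<Rightarrow> real" where
  "tau u = (case u of (x,y,z) \<Rightarrow> - z * zbar u)"

definition Qx :: "pt \<Rightarrow> pt" where
  "Qx u = (case u of (x,y,z) \<Rightarrow> (y*z - x, y, z))"

definition Qy :: "pt \<Rightarrow> pt" where
  "Qy u = (case u of (x,y,z) \<Rightarrow> (x, x*z - y, z))"

definition Qz :: "pt \<Rightarrow> pt" where
  "Qz u = (case u of (x,y,z) \<Rightarrow> (x, y, -x*y - z))"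

definition Omega0M :: "pt set" where
  "Omega0M = {(x,y,z). z < -2 \<and> x*y + z > 2}"

datatype gen = GX | GY | GZ

fun Qg :: "gen \<Rightarrow> pt \<Rightarrow> pt" where
  "Qg GX = Qx" | "Qg GY = Qy" | "Qg GZ = Qz"

text \<open>Nodes of the tree B_Lambda(u): a node is a point v together with the label of the
  involution by which it was obtained from its parent (None for the root).\<close>
inductive tree_node :: "pt \<Rightarrow> pt \<Rightarrow> gen option \<Rightarrow> bool" for u :: pt where
  root: "tree_node u u None"
| root_child: "l \<in> {GX, GY} \<Longrightarrow> tree_node u (Qg l u) (Some l)"
| child: "tree_node u v (Some l) \<Longrightarrow> l' \<noteq> l \<Longrightarrow> tree_node u (Qg l' v) (Some l')"

fun child_gens :: "gen option \<Rightarrow> gen set" where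
  "child_gens None = {GX, GY}"
| "child_gens (Some l) = UNIV - {l}"

end

theory Submission
  imports Defs
begin

text \<open>Since \<open>\<tau>(x,y,z) = xyz + z\<^sup>2\<close>, the flips \<open>Q\<^sub>x, Q\<^sub>y\<close> (which keep
  \<open>z\<close>) change \<open>\<tau>\<close> exactly as they change the product \<open>p = xyz\<close>, while \<open>Q\<^sub>z\<close>
  swaps the two factors \<open>z\<close> and \<open>-xy - z\<close> of \<open>\<tau>\<close> and so fixes it. A Vieta flip
  \<open>w \<mapsto> c - w\<close> of a coordinate with partner product \<open>c\<close> strictly increases \<open>wc\<close>
  whenever \<open>2wc < c\<^sup>2\<close>, and afterwards \<open>c\<^sup>2 < 2wc\<close>. Along the tree one therefore
  keeps track of \<open>z\<^sup>2 > 4\<close> and, via the label, of which coordinate was flipped last: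
  after a \<open>Q\<^sub>z\<close>-step (or at the root) \<open>p < 0\<close>, so both \<open>Q\<^sub>x\<close> and \<open>Q\<^sub>y\<close> are
  increasing flips; after a \<open>Q\<^sub>x\<close>-step \<open>(yz)\<^sup>2 < 2p\<close>, and multiplying by \<open>(xz)\<^sup>2\<close>
  and using \<open>z\<^sup>2 > 4\<close> turns this into \<open>2p < (xz)\<^sup>2\<close>, so the next \<open>Q\<^sub>y\<close>-step
  is again an increasing flip.\<close>

fun node_invariant :: "gen option \<Rightarrow> pt \<Rightarrow> bool" where
  "node_invariant lab (x, y, z) \<longleftrightarrow> 4 < z\<^sup>2 \<and>
     (case lab of
        Some GX \<Rightarrow> (y * z)\<^sup>2 < 2 * (x * y * z)
      | Some GY \<Rightarrow> (x * z)\<^sup>2 < 2 * (x * y * z)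
      | _ \<Rightarrow> x * y * z < 0)"

lemma tau_eq: "tau (x, y, z) = x * y * z + z\<^sup>2"
  by (simp add: tau_def zbar_def power2_eq_square algebra_simps)

lemma tau_Qz: "tau (Qz v) = tau v"
  by (cases v) (simp add: tau_def zbar_def Qz_def algebra_simps)

lemma vieta_flip:
  fixes w c :: real
  assumes "2 * (w * c) < c\<^sup>2"
  shows "w * c < (c - w) * c" and "c\<^sup>2 < 2 * ((c - w) * c)"
  using assms by (simp_all add: algebra_simps power2_eq_square)

lemma flip_ready_other:
  fixes x y z :: real
  assumes z: "4 < z\<^sup>2" and flipped: "(y * z)\<^sup>2 < 2 * (x * y * z)"
  shows "2 * (x * y * z) < (x * z)\<^sup>2"
proof -
  define p where "p = x * y * z"
  have p_pos: "0 < p"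
    using flipped zero_le_power2[of "y * z"] unfolding p_def by linarith
  have "p * (p * z\<^sup>2) = (y * z)\<^sup>2 * (x * z)\<^sup>2"
    unfolding p_def by algebra
  also have "\<dots> \<le> 2 * p * (x * z)\<^sup>2"
    using flipped unfolding p_def by (intro mult_right_mono) auto
  finally have "p * z\<^sup>2 \<le> 2 * (x * z)\<^sup>2"
    using p_pos by (simp add: mult.assoc)
  moreover have "4 * p < p * z\<^sup>2"
    using p_pos z by simp
  ultimately show ?thesis
    unfolding p_def by linarith
qed

lemma Qx_step:
  assumes inv: "node_invariant lab (x, y, z)" and not_GX: "lab \<noteq> Some GX"
  shows "node_invariant (Some GX) (Qx (x, y, z))" and "tau (x, y, z) < tau (Qx (x, y, z))"
proof -
  have ready: "2 * (x * (y * z)) < (y * z)\<^sup>2"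
  proof (cases "lab = Some GY")
    case True
    then have "(x * z)\<^sup>2 < 2 * (y * x * z)"
      using inv by (simp add: mult_ac)
    with flip_ready_other[of z x y] inv show ?thesis
      by (simp add: mult_ac)
  next
    case False
    then have "x * (y * z) < 0"
      using inv not_GX by (cases lab rule: option.exhaust) (auto simp: mult.assoc split: gen.splits)
    then show ?thesis
      using zero_le_power2[of "y * z"] by linarith
  qed
  from vieta_flip[OF ready] inv show
    "node_invariant (Some GX) (Qx (x, y, z))" and "tau (x, y, z) < tau (Qx (x, y, z))"
    by (simp_all add: Qx_def tau_eq mult_ac)
qed

lemma Qy_step:
  assumes inv: "node_invariant lab (x, y, z)" and not_GY: "lab \<noteq> Some GY"
  shows "node_invariant (Some GY) (Qy (x, y, z))" and "tau (x, y, z) < tau (Qy (x, y, z))"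
proof -
  have ready: "2 * (y * (x * z)) < (x * z)\<^sup>2"
  proof (cases "lab = Some GX")
    case True
    with flip_ready_other[of z y x] inv show ?thesis
      by (simp add: mult_ac)
  next
    case False
    then have "y * (x * z) < 0"
      using inv not_GY by (cases lab rule: option.exhaust) (auto simp: mult_ac split: gen.splits)
    then show ?thesis
      using zero_le_power2[of "x * z"] by linarith
  qed
  from vieta_flip[OF ready] inv show
    "node_invariant (Some GY) (Qy (x, y, z))" and "tau (x, y, z) < tau (Qy (x, y, z))"
    by (simp_all add: Qy_def tau_eq mult_ac)
qed

lemma Qz_step:
  assumes inv: "node_invariant (Some l) (x, y, z)" and not_GZ: "l \<noteq> GZ"
  shows "node_invariant (Some GZ) (Qz (x, y, z))"
proof -
  have z: "4 < z\<^sup>2"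
    using inv by simp
  have "(y * z)\<^sup>2 < 2 * (x * y * z) \<or> (x * z)\<^sup>2 < 2 * (x * y * z)"
    using inv not_GZ by (cases l) auto
  then have p_pos: "0 < x * y * z"
    using zero_le_power2[of "y * z"] zero_le_power2[of "x * z"] by linarith
  have "(- x * y - z)\<^sup>2 = (x * y)\<^sup>2 + 2 * (x * y * z) + z\<^sup>2"
    by algebra
  then have "4 < (- x * y - z)\<^sup>2"
    using z p_pos zero_le_power2[of "x * y"] by linarith
  moreover have "x * y * (- x * y - z) = - (x * y)\<^sup>2 - x * y * z"
    by algebra
  then have "x * y * (- x * y - z) < 0"
    using p_pos zero_le_power2[of "x * y"] by linarith
  ultimately show ?thesis
    by (simp add: Qz_def)
qed

lemma node_invariant_child:
  assumes inv: "node_invariant lab v" and child: "l \<in> child_gens lab"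
  shows "node_invariant (Some l) (Qg l v)" and "tau v \<le> tau (Qg l v)"
    and "l \<noteq> GZ \<Longrightarrow> tau v < tau (Qg l v)"
proof -
  obtain x y z where v: "v = (x, y, z)"
    by (cases v) auto
  have "lab \<noteq> Some l"
    using child by (cases lab) auto
  then have "node_invariant (Some l) (Qg l v) \<and> tau v < tau (Qg l v)" if "l \<noteq> GZ"
    using Qx_step[of lab x y z] Qy_step[of lab x y z] inv that unfolding v
    by (cases l) auto
  moreover have "node_invariant (Some GZ) (Qg GZ v) \<and> tau v = tau (Qg GZ v)" if "l = GZ"
    using child that Qz_step[of _ x y z] inv tau_Qz[of v] unfolding v
    by (cases lab) auto
  ultimately show "node_invariant (Some l) (Qg l v)" and "tau v \<le> tau (Qg l v)"
    and "l \<noteq> GZ \<Longrightarrow> tau v < tau (Qg l v)"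
    by (cases "l = GZ"; fastforce)+
qed

lemma node_invariant_root:
  assumes "u \<in> Omega0M"
  shows "node_invariant None u"
proof -
  obtain x y z where u: "u = (x, y, z)" and z: "z < -2" and xy: "2 - z < x * y"
    using assms unfolding Omega0M_def by auto
  have "x * y * z < 0"
    using z xy by (simp add: mult_pos_neg)
  moreover have "2\<^sup>2 < (- z)\<^sup>2"
    using z by (intro power_strict_mono) auto
  ultimately show ?thesis
    unfolding u by simp
qed

lemma tree_node_invariant:
  assumes "u \<in> Omega0M" and "tree_node u v lab"
  shows "node_invariant lab v \<and> tau u \<le> tau v"
  using assms(2)
proof (induction rule: tree_node.induct)
  case root
  show ?case
    using node_invariant_root[OF assms(1)] by simp
next
  case (root_child l)
  then show ?case
    using node_invariant_child[OF node_invariant_root[OF assms(1)], of l] by simp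
next
  case (child v l l')
  then have "l' \<in> child_gens (Some l)"
    by simp
  with child show ?case
    using node_invariant_child[of "Some l" v l'] by fastforce
qed

theorem mainTheorem8:
  fixes u v :: pt and lab :: "gen option"
  assumes "u \<in> Omega0M"
    and "tree_node u v lab"
  shows "(\<forall>l \<in> child_gens lab. tau v \<le> tau (Qg l v))
         \<and> (\<exists>l \<in> child_gens lab. tau v < tau (Qg l v))
         \<and> tau u \<le> tau v"
proof -
  have inv: "node_invariant lab v" and root_le: "tau u \<le> tau v"
    using tree_node_invariant[OF assms] by auto
  have "GX \<in> child_gens lab \<or> GY \<in> child_gens lab"
    by (cases lab) auto
  then have "\<exists>l \<in> child_gens lab. l \<noteq> GZ"
    by auto
  then show ?thesis
    using node_invariant_child[OF inv] root_le by blast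
qed

end
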